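(* Let $q=2^h$, $m\ge1$, and on $V=\mathbb{F}_q^{2m}$ let $\langle u,v\rangle=uFv^T$ with $F=\begin{pmatrix}0&I_m\\ I_m&0\end{pmatrix}$, $\vartheta_0(u)=uEu^T$ with $E=\begin{pmatrix}0&I_m\\0&0\end{pmatrix}$, and $\vartheta_a(u)=\vartheta_0(u)+\langle a,u\rangle^2$ for $a\in V$. For $c\in V$ let $T_c:V\to V$, $u\mapsto u+\langle u,c\rangle c$ be the symplectic transvection, and for a quadratic form $\Theta$ and invertible linear $A$ put $\Theta^A(u)=\Theta(uA^{-1})$. Let $a,b\in V$, $a\neq b$. The following are equivalent: (i) there exists $c\in V$ with $\vartheta_a^{T_c}=\vartheta_b$; (ii) there exists $\gamma\in\mathbb{F}_q^*$ with $\vartheta_a^{T_{\gamma(a+b)}}=\vartheta_b$; (iii) $\mathrm{Tr}_{\mathbb{F}_q/\mathbb{F}_2}(\vartheta_0(a))=\mathrm{Tr}_{\mathbb{F}_q/\mathbb{F}_2}(\vartheta_0(b))$; (iv) the polynomial $t^2+t+\vartheta_0(a)+\vartheta_0(b)$ is reducible over $\mathbb{F}_q$. *)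

theory Defs
  imports "HOL-Analysis.Analysis" "HOL-Computational_Algebra.Polynomial"
begin

text \<open>The space V = F_q^{2m} is represented as pairs (x, y) with x, y in F_q^m,
  i.e. a row vector u = (x | y) split into its two blocks of length m.\<close>

type_synonym ('a, 'm) sp = "('a ^ 'm) \<times> ('a ^ 'm)"

text \<open>Symplectic form u F v^T with F = [[0, I_m], [I_m, 0]].\<close>
definition bil :: "('a::field, 'm::finite) sp \<Rightarrow> ('a, 'm) sp \<Rightarrow> 'a" where
  "bil u v = (\<Sum>i\<in>UNIV. fst u $ i * snd v $ i + snd u $ i * fst v $ i)"

text \<open>Quadratic form u E u^T with E = [[0, I_m], [0, 0]].\<close>
definition theta0 :: "('a::field, 'm::finite) sp \<Rightarrow> 'a" where
  "theta0 u = (\<Sum>i\<in>UNIV. fst u $ i * snd u $ i)"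

definition theta :: "('a::field, 'm::finite) sp \<Rightarrow> ('a, 'm) sp \<Rightarrow> 'a" where
  "theta a u = theta0 u + (bil a u)^2"

definition sp_scale :: "'a::field \<Rightarrow> ('a, 'm::finite) sp \<Rightarrow> ('a, 'm) sp" where
  "sp_scale k u = (k *s fst u, k *s snd u)"

definition sp_add :: "('a::field, 'm::finite) sp \<Rightarrow> ('a, 'm) sp \<Rightarrow> ('a, 'm) sp" where
  "sp_add u v = (fst u + fst v, snd u + snd v)"

definition transv :: "('a::field, 'm::finite) sp \<Rightarrow> ('a, 'm) sp \<Rightarrow> ('a, 'm) sp" where
  "transv c u = sp_add u (sp_scale (bil u c) c)"

definition qf_act :: "(('a, 'm) sp \<Rightarrow> 'a) \<Rightarrow> (('a, 'm) sp \<Rightarrow> ('a, 'm) sp) \<Rightarrow> ('a, 'm) sp \<Rightarrow> 'a" where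
  "qf_act Theta A = (\<lambda>u. Theta (inv A u))"

text \<open>Absolute trace Tr_{F_q/F_2}(x) = sum_{i<h} x^(2^i) for q = 2^h.\<close>
definition trace2 :: "nat \<Rightarrow> 'a::field \<Rightarrow> 'a" where
  "trace2 h x = (\<Sum>i<h. x ^ (2 ^ i))"

end

theory Submission
  imports Defs
begin

text \<open>
  In characteristic 2 the transvection T_c is an involution and
  theta_a(T_c u) = theta_a(u) + <c,u>^2 (1 + theta_a(c)), while theta_b(u) = theta_a(u) + <a+b,u>^2.
  As squaring is injective and the form is nondegenerate, T_c carries theta_a to theta_b iff
  a + b = s c with s^2 = 1 + theta_a(c); so c is a nonzero multiple of a + b.  For c = gamma (a + b)
  the condition says that z = gamma^-2 solves the Artin-Schreier equation
  z^2 + z = theta0(a) + theta0(b) + beta^2 + beta with beta = <a,b>, and the shift z + beta removes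
  beta^2 + beta.  Finally z^2 + z = d is solvable iff Tr(d) = 0: the map z \<mapsto> z^2 + z is
  two-to-one into the kernel of the trace, and this kernel, being the root set of a polynomial of
  degree 2^(h-1), has at most q/2 elements.
\<close>

section \<open>Finite fields of characteristic 2\<close>

lemma finite_field_power_card_eq_self:
  fixes x :: "'a::{field,finite}"
  shows "x ^ CARD('a) = x"
proof (cases "x = 0")
  case False
  have "(\<Prod>y\<in>UNIV-{0}. x * y) = (\<Prod>y\<in>UNIV-{0::'a}. y)"
    by (rule prod.reindex_bij_witness[of _ "\<lambda>y. y / x" "\<lambda>y. x * y"]) (use False in auto)
  then have "x ^ (CARD('a) - 1) = 1"
    by (simp add: prod.distrib card_Diff_subset prod_zero_iff)
  moreover have "CARD('a) = Suc (CARD('a) - 1)"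
    using finite_UNIV_card_ge_0 by simp
  ultimately show ?thesis
    by (metis power_Suc mult_1_right)
qed simp

lemma CHAR_eq_2_if_card_eq_power_2:
  assumes "CARD('a::{field,finite}) = 2 ^ h"
  shows "CHAR('a) = 2"
proof -
  have "h \<noteq> 0"
    using assms card_2_iff[of "{0::'a, 1}"] card_mono[of "UNIV::'a set" "{0, 1}"] by (cases h) auto
  then have "(-1::'a) = 1"
    using finite_field_power_card_eq_self[of "-1::'a"] by (simp add: assms)
  then have "of_nat 2 = (0::'a)"
    by (metis add_eq_0_iff equation_minus_iff of_nat_numeral one_add_one)
  then have "CHAR('a) dvd 2"
    using of_nat_eq_0_iff_char_dvd by blast
  then show ?thesis
    using CHAR_not_1[where 'a='a] dvd_imp_le[of "CHAR('a)" 2] by (auto simp: le_Suc_eq numeral_2_eq_2)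
qed

lemma two_eq_0_CHAR_2:
  assumes "CHAR('a::semiring_1) = 2"
  shows "(2::'a) = 0"
  using of_nat_CHAR[where 'a='a] assms by simp

lemma add_self_CHAR_2:
  fixes x :: "'a::ring_1"
  assumes "CHAR('a) = 2"
  shows "x + x = 0"
  by (metis assms add_eq_0_iff2 uminus_CHAR_2)

lemma add_eq_0_iff_eq_CHAR_2:
  fixes x y :: "'a::ring_1"
  assumes "CHAR('a) = 2"
  shows "x + y = 0 \<longleftrightarrow> x = y"
  by (metis assms add_eq_0_iff2 uminus_CHAR_2)

lemma power2_add_CHAR_2:
  fixes x y :: "'a::comm_ring_1"
  assumes "CHAR('a) = 2"
  shows "(x + y) ^ 2 = x ^ 2 + y ^ 2"
  using freshmans_dream[where x=x and y=y] assms by simp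

lemma power2_eq_iff_CHAR_2:
  fixes x y :: "'a::idom"
  assumes "CHAR('a) = 2"
  shows "x ^ 2 = y ^ 2 \<longleftrightarrow> x = y"
  by (metis assms add_eq_0_iff_eq_CHAR_2 power2_add_CHAR_2 zero_eq_power2)

lemma surj_power2_finite_CHAR_2:
  assumes "CHAR('a::{idom,finite}) = 2"
  shows "surj (\<lambda>x::'a. x ^ 2)"
  by (rule finite_UNIV_inj_surj) (auto intro: injI simp: power2_eq_iff_CHAR_2[OF assms])

section \<open>The Artin-Schreier equation and the absolute trace\<close>

lemma trace2_add:
  fixes x y :: "'a::field"
  assumes "CHAR('a) = 2"
  shows "trace2 h (x + y) = trace2 h x + trace2 h y"
proof -
  have "(x + y) ^ 2 ^ i = x ^ 2 ^ i + y ^ 2 ^ i" for i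
    using freshmans_dream'[where x = x and y = y and n = i] assms by simp
  then show ?thesis
    unfolding trace2_def by (simp add: sum.distrib)
qed

lemma trace2_artin_schreier:
  fixes z :: "'a::field"
  assumes "CHAR('a) = 2"
  shows "trace2 h (z ^ 2 + z) = z ^ 2 ^ h + z"
proof -
  have "trace2 h (z ^ 2 + z) = trace2 h (z ^ 2) + trace2 h z"
    by (rule trace2_add[OF assms])
  also have "\<dots> = (\<Sum>i<h. z ^ 2 ^ Suc i - z ^ 2 ^ i)"
    unfolding trace2_def
    by (simp add: sum.distrib minus_CHAR_2[OF assms] flip: power_mult)
  also have "\<dots> = z ^ 2 ^ h + z"
    using sum_lessThan_telescope[of "\<lambda>i. z ^ 2 ^ i" h] by (simp add: minus_CHAR_2[OF assms])
  finally show ?thesis .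
qed

lemma poly_trace2: "poly (\<Sum>i<h. monom 1 (2 ^ i)) = trace2 h"
  by (simp add: fun_eq_iff trace2_def poly_sum poly_monom)

lemma card_trace2_roots_le:
  assumes "h \<noteq> 0"
  shows "card {x::'a::field. trace2 h x = 0} \<le> 2 ^ (h - 1)"
proof -
  define P :: "'a poly" where "P = (\<Sum>i<h. monom 1 (2 ^ i))"
  have "coeff P 1 = (\<Sum>i<h. if i = 0 then 1 else 0)"
    unfolding P_def coeff_sum coeff_monom by (intro sum.cong) auto
  then have "P \<noteq> 0"
    using assms by auto
  moreover have "degree P \<le> 2 ^ (h - 1)"
    unfolding P_def
  proof (rule degree_sum_le)
    fix i assume "i \<in> {..<h}"
    then have "(2::nat) ^ i \<le> 2 ^ (h - 1)"
      by (intro power_increasing) auto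
    then show "degree (monom (1::'a) (2 ^ i)) \<le> 2 ^ (h - 1)"
      using degree_monom_le order.trans by blast
  qed simp
  ultimately show ?thesis
    using card_poly_roots_bound[of P] by (simp add: P_def poly_trace2)
qed

lemma artin_schreier_eq_iff:
  fixes w z :: "'a::idom"
  assumes "CHAR('a) = 2"
  shows "w ^ 2 + w = z ^ 2 + z \<longleftrightarrow> w = z \<or> w = z + 1"
proof -
  have "(w + z) * (w + z + 1) = (w ^ 2 + w) + (z ^ 2 + z)"
    using add_self_CHAR_2[OF assms, of "w * z"]
    by (simp add: algebra_simps power2_eq_square)
  then have "w ^ 2 + w = z ^ 2 + z \<longleftrightarrow> (w + z) * (w + (z + 1)) = 0"
    using add_eq_0_iff_eq_CHAR_2[OF assms, of "w ^ 2 + w" "z ^ 2 + z"] by (simp add: add.assoc)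
  also have "\<dots> \<longleftrightarrow> w = z \<or> w = z + 1"
    by (simp add: add_eq_0_iff_eq_CHAR_2[OF assms])
  finally show ?thesis .
qed

lemma card_range_artin_schreier:
  assumes "CHAR('a::{idom,finite}) = 2"
  shows "2 * card (range (\<lambda>z::'a. z ^ 2 + z)) = CARD('a)"
proof -
  define f where "f z = z ^ 2 + z" for z :: 'a
  have fibre: "{w. f w = f z} = {z, z + 1}" for z
    using artin_schreier_eq_iff[OF assms] by (auto simp: f_def)
  have "CARD('a) = (\<Sum>y\<in>range f. card {w. f w = y})"
    using sum.image_gen[of UNIV "\<lambda>_. 1::nat" f] by simp
  also have "\<dots> = (\<Sum>y\<in>range f. 2)"
    by (intro sum.cong) (auto simp: fibre)
  finally show ?thesis
    by (simp add: f_def)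
qed

lemma trace2_eq_0_iff_artin_schreier:
  fixes d :: "'a::{field,finite}"
  assumes "CARD('a) = 2 ^ h"
  shows "trace2 h d = 0 \<longleftrightarrow> (\<exists>z. z ^ 2 + z = d)"
proof -
  have char: "CHAR('a) = 2"
    using CHAR_eq_2_if_card_eq_power_2[OF assms] .
  have "h \<noteq> 0"
    using card_range_artin_schreier[OF char] assms by (metis dvd_triv_left odd_one power_0)
  have "trace2 h (z ^ 2 + z) = 0" for z :: 'a
    using finite_field_power_card_eq_self[of z]
    by (simp add: trace2_artin_schreier[OF char] assms add_self_CHAR_2[OF char])
  then have "range (\<lambda>z. z ^ 2 + z) \<subseteq> {x::'a. trace2 h x = 0}"
    by auto
  moreover have "card {x::'a. trace2 h x = 0} \<le> card (range (\<lambda>z::'a. z ^ 2 + z))"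
    using card_trace2_roots_le[OF \<open>h \<noteq> 0\<close>] card_range_artin_schreier[OF char] assms
    by (cases h) auto
  ultimately have "range (\<lambda>z. z ^ 2 + z) = {x::'a. trace2 h x = 0}"
    by (intro card_seteq) auto
  then show ?thesis
    by (metis (mono_tags, lifting) mem_Collect_eq rangeE rangeI)
qed

lemma degree_2_not_irreducible_iff_root:
  fixes p :: "'a::field poly"
  assumes "degree p = 2"
  shows "\<not> irreducible p \<longleftrightarrow> (\<exists>x. poly p x = 0)"
proof
  assume "\<not> irreducible p"
  moreover have "p \<noteq> 0"
    using assms by auto
  moreover have "\<not> p dvd 1"
    using assms \<open>p \<noteq> 0\<close> by (simp add: is_unit_iff_degree)
  ultimately obtain q r where qr: "p = q * r" "\<not> q dvd 1" "\<not> r dvd 1"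
    unfolding irreducible_def by blast
  with \<open>p \<noteq> 0\<close> have "degree q \<noteq> 0" "degree r \<noteq> 0" "degree q + degree r = 2"
    using assms by (auto simp: is_unit_iff_degree degree_mult_eq)
  then have "degree q = 1"
    by linarith
  then obtain c0 c1 where "q = [:c0, c1:]" "c1 \<noteq> 0"
    by (rule degree1_coeffs)
  then have "poly p (- c0 / c1) = 0"
    using qr(1) by simp
  then show "\<exists>x. poly p x = 0" ..
next
  assume "\<exists>x. poly p x = 0"
  then show "\<not> irreducible p"
    using assms root_imp_reducible_poly by fastforce
qed

lemma artin_schreier_shift:
  fixes d \<beta> :: "'a::comm_ring_1"
  assumes char: "CHAR('a) = 2"
  shows "(\<exists>z. z ^ 2 + z = d + (\<beta> ^ 2 + \<beta>)) \<longleftrightarrow> (\<exists>z. z ^ 2 + z = d)"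
proof -
  have shift: "(z + \<beta>) ^ 2 + (z + \<beta>) = (z ^ 2 + z) + (\<beta> ^ 2 + \<beta>)" for z
    by (simp add: power2_add_CHAR_2[OF char] algebra_simps)
  show ?thesis
  proof
    assume "\<exists>z. z ^ 2 + z = d + (\<beta> ^ 2 + \<beta>)"
    then obtain z where "z ^ 2 + z = d + (\<beta> ^ 2 + \<beta>)" ..
    then have "(z + \<beta>) ^ 2 + (z + \<beta>) = d"
      unfolding shift by (simp add: add.assoc add_self_CHAR_2[OF char])
    then show "\<exists>z. z ^ 2 + z = d" ..
  next
    assume "\<exists>z. z ^ 2 + z = d"
    then obtain z where "z ^ 2 + z = d" ..
    then have "(z + \<beta>) ^ 2 + (z + \<beta>) = d + (\<beta> ^ 2 + \<beta>)"
      unfolding shift by simp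
    then show "\<exists>z. z ^ 2 + z = d + (\<beta> ^ 2 + \<beta>)" ..
  qed
qed

lemma artin_schreier_nonzero_solution:
  fixes d :: "'a::idom"
  assumes char: "CHAR('a) = 2" and "z ^ 2 + z = d"
  obtains y where "y \<noteq> 0" "y ^ 2 + y = d"
proof (cases "z = 0")
  case True
  with assms have "1 ^ 2 + 1 = d"
    by (simp add: two_eq_0_CHAR_2[OF char] flip: one_add_one)
  then show ?thesis
    by (intro that[of 1]) simp_all
qed (use assms that in blast)

lemma exists_inverse_power2_eq_iff_artin_schreier:
  fixes d :: "'a::{field,finite}"
  assumes char: "CHAR('a) = 2"
  shows "(\<exists>\<gamma>. \<gamma> \<noteq> 0 \<and> (inverse \<gamma>) ^ 2 = 1 + \<gamma> ^ 2 * d) \<longleftrightarrow> (\<exists>z. z ^ 2 + z = d)"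
proof
  assume "\<exists>\<gamma>. \<gamma> \<noteq> 0 \<and> (inverse \<gamma>) ^ 2 = 1 + \<gamma> ^ 2 * d"
  then obtain \<gamma> where "\<gamma> \<noteq> 0" and \<gamma>: "(inverse \<gamma>) ^ 2 = 1 + \<gamma> ^ 2 * d"
    by blast
  have "((inverse \<gamma>) ^ 2) ^ 2 = (inverse \<gamma>) ^ 2 * (1 + \<gamma> ^ 2 * d)"
    using \<gamma> by (simp add: power2_eq_square)
  also have "\<dots> = (inverse \<gamma>) ^ 2 + d"
    using \<open>\<gamma> \<noteq> 0\<close> by (simp add: field_simps)
  finally have "((inverse \<gamma>) ^ 2) ^ 2 = (inverse \<gamma>) ^ 2 + d" .
  then have "((inverse \<gamma>) ^ 2) ^ 2 + (inverse \<gamma>) ^ 2 = d"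
    by (simp add: add.commute add.left_commute add_self_CHAR_2[OF char])
  then show "\<exists>z. z ^ 2 + z = d" ..
next
  assume "\<exists>z. z ^ 2 + z = d"
  then obtain z where "z \<noteq> 0" and z: "z ^ 2 + z = d"
    using artin_schreier_nonzero_solution[OF char] by metis
  obtain t where t: "t ^ 2 = z"
    using surj_power2_finite_CHAR_2[OF char] by (metis surjD)
  with \<open>z \<noteq> 0\<close> have "t \<noteq> 0"
    by auto
  have "(inverse t) ^ 2 * d = z + 1"
    using z t \<open>z \<noteq> 0\<close> by (simp add: power_inverse power2_eq_square field_simps)
  then have "1 + (inverse t) ^ 2 * d = z + (1 + 1)"
    by (simp add: algebra_simps)
  then have "(inverse (inverse t)) ^ 2 = 1 + (inverse t) ^ 2 * d"
    using t by (simp add: add_self_CHAR_2[OF char])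
  then show "\<exists>\<gamma>. \<gamma> \<noteq> 0 \<and> (inverse \<gamma>) ^ 2 = 1 + \<gamma> ^ 2 * d"
    using \<open>t \<noteq> 0\<close> by (intro exI[of _ "inverse t"]) simp
qed

lemma artin_schreier_poly_reducible_iff:
  fixes d :: "'a::field"
  assumes char: "CHAR('a) = 2"
  shows "\<not> irreducible [:d, 1, 1:] \<longleftrightarrow> (\<exists>z. z ^ 2 + z = d)"
proof -
  have "poly [:d, 1, 1:] z = 0 \<longleftrightarrow> z ^ 2 + z = d" for z
    using add_eq_0_iff_eq_CHAR_2[OF char, of "z ^ 2 + z" d] by (simp add: power2_eq_square algebra_simps)
  then show ?thesis
    using degree_2_not_irreducible_iff_root[of "[:d, 1, 1:]"] by simp
qed

section \<open>The symplectic space and its transvections\<close>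

lemma bil_commute: "bil u v = bil v u"
  unfolding bil_def by (simp add: algebra_simps)

lemma bil_add_left: "bil (sp_add u v) w = bil u w + bil v w"
  unfolding bil_def sp_add_def by (simp add: algebra_simps sum.distrib)

lemma bil_add_right: "bil w (sp_add u v) = bil w u + bil w v"
  by (metis bil_commute bil_add_left)

lemma bil_scale_left: "bil (sp_scale k u) w = k * bil u w"
  unfolding bil_def sp_scale_def by (simp add: algebra_simps sum_distrib_left)

lemma bil_scale_right: "bil w (sp_scale k u) = k * bil w u"
  by (metis bil_commute bil_scale_left)

lemma bil_zero_left [simp]: "bil 0 u = 0"
  unfolding bil_def by simp

lemma bil_self_CHAR_2:
  assumes "CHAR('a::field) = 2"
  shows "bil u u = (0::'a)"
  unfolding bil_def by (simp add: mult.commute add_self_CHAR_2[OF assms])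

lemma theta0_add: "theta0 (sp_add u v) = theta0 u + theta0 v + bil u v"
  unfolding theta0_def bil_def sp_add_def by (simp add: algebra_simps sum.distrib)

lemma theta0_scale: "theta0 (sp_scale k u) = k ^ 2 * theta0 u"
  unfolding theta0_def sp_scale_def by (simp add: algebra_simps sum_distrib_left power2_eq_square)

lemma sp_scale_sp_scale: "sp_scale k (sp_scale l u) = sp_scale (k * l) u"
  unfolding sp_scale_def by simp

lemma sp_scale_one [simp]: "sp_scale 1 u = u"
  unfolding sp_scale_def by simp

lemma sp_add_eq_0_iff_CHAR_2:
  fixes u v :: "('a::field, 'm::finite) sp"
  assumes "CHAR('a) = 2"
  shows "sp_add u v = 0 \<longleftrightarrow> u = v"
  unfolding sp_add_def zero_prod_def prod_eq_iff vec_eq_iff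
  by (simp add: add_eq_0_iff_eq_CHAR_2[OF assms])

lemma bil_eqI:
  fixes v w :: "('a::field, 'm::finite) sp"
  assumes "\<And>u. bil v u = bil w u"
  shows "v = w"
proof -
  have "bil v (0, axis i 1) = bil w (0, axis i 1)" "bil v (axis i 1, 0) = bil w (axis i 1, 0)" for i
    using assms by blast+
  then show ?thesis
    unfolding bil_def axis_def prod_eq_iff vec_eq_iff
    by (simp add: if_distrib[of "\<lambda>x. _ * x"] cong: if_cong)
qed

lemma sp_scale_eq_self_iff:
  fixes w :: "('a::field, 'm::finite) sp"
  assumes "w \<noteq> 0"
  shows "sp_scale k w = w \<longleftrightarrow> k = 1"
proof
  assume scaled: "sp_scale k w = w"
  obtain u where "bil w u \<noteq> 0"
    using assms bil_eqI[of w 0] by auto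
  moreover have "k * bil w u = bil w u"
    using scaled by (metis bil_scale_left)
  ultimately show "k = 1"
    by simp
qed simp

lemma bil_transv_left:
  assumes "CHAR('a::field) = 2"
  shows "bil (transv c u) c = (bil u c :: 'a)"
  unfolding transv_def by (simp add: bil_add_left bil_scale_left bil_self_CHAR_2[OF assms])

lemma transv_transv:
  fixes c u :: "('a::field, 'm::finite) sp"
  assumes "CHAR('a) = 2"
  shows "transv c (transv c u) = u"
proof -
  have "transv c (transv c u) = sp_add (transv c u) (sp_scale (bil u c) c)"
    using bil_transv_left[OF assms, of c u] by (simp only: transv_def[of c "transv c u"])
  also have "\<dots> = sp_add (sp_add u (sp_scale (bil u c) c)) (sp_scale (bil u c) c)"
    unfolding transv_def ..
  finally show ?thesis
    by (simp add: sp_add_def sp_scale_def prod_eq_iff vec_eq_iff two_eq_0_CHAR_2[OF assms])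
qed

lemma inv_transv:
  fixes c :: "('a::field, 'm::finite) sp"
  assumes "CHAR('a) = 2"
  shows "inv (transv c) = transv c"
  by (rule inv_equality) (simp_all add: transv_transv[OF assms])

lemma theta_transv:
  fixes a c u :: "('a::field, 'm::finite) sp"
  assumes "CHAR('a) = 2"
  shows "theta a (transv c u) = theta a u + (bil c u) ^ 2 * (1 + theta a c)"
proof -
  let ?l = "bil u c"
  have "theta a (transv c u) = theta0 u + ?l ^ 2 * theta0 c + ?l * ?l + (bil a u + ?l * bil a c) ^ 2"
    unfolding theta_def transv_def
    by (simp add: theta0_add theta0_scale bil_scale_right bil_add_right)
  also have "\<dots> = theta0 u + ?l ^ 2 * theta0 c + ?l ^ 2 + (bil a u) ^ 2 + ?l ^ 2 * (bil a c) ^ 2"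
    by (simp add: power2_add_CHAR_2[OF assms] power2_eq_square algebra_simps two_eq_0_CHAR_2[OF assms])
  finally show ?thesis
    unfolding theta_def by (simp add: bil_commute[of c u] algebra_simps)
qed

lemma qf_act_transv_theta_eq_iff:
  fixes a b c :: "('a::field, 'm::finite) sp"
  assumes char: "CHAR('a) = 2" and s: "s ^ 2 = 1 + theta a c"
  shows "qf_act (theta a) (transv c) = theta b \<longleftrightarrow> sp_add a b = sp_scale s c"
proof -
  have "theta a (transv c u) + theta b u = (bil (sp_add a b) u + bil (sp_scale s c) u) ^ 2" for u
  proof -
    have "theta a (transv c u) = theta a u + (s * bil c u) ^ 2"
      unfolding theta_transv[OF char] s[symmetric] by (simp add: power_mult_distrib)
    then have "theta a (transv c u) + theta b u
        = (theta0 u + theta0 u) + (bil a u) ^ 2 + (bil b u) ^ 2 + (s * bil c u) ^ 2"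
      unfolding theta_def by (simp add: algebra_simps)
    then show ?thesis
      by (simp add: add_self_CHAR_2[OF char] power2_add_CHAR_2[OF char] bil_add_left bil_scale_left)
  qed
  then have "theta a (transv c u) = theta b u \<longleftrightarrow> bil (sp_add a b) u = bil (sp_scale s c) u" for u
    by (metis add_eq_0_iff_eq_CHAR_2[OF char] zero_eq_power2)
  then show ?thesis
    unfolding qf_act_def inv_transv[OF char] fun_eq_iff by (metis bil_eqI)
qed

lemma theta_scale_sp_add:
  fixes a b :: "('a::field, 'm::finite) sp"
  assumes "CHAR('a) = 2"
  shows "theta a (sp_scale g (sp_add a b)) = g ^ 2 * (theta0 a + theta0 b + ((bil a b) ^ 2 + bil a b))"
  unfolding theta_def
  by (simp add: theta0_scale theta0_add bil_scale_right bil_add_right bil_self_CHAR_2[OF assms]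
      power_mult_distrib algebra_simps)

lemma exists_transv_theta_eq_iff_scale_sp_add:
  fixes a b :: "('a::{field,finite}, 'm::finite) sp"
  assumes char: "CHAR('a) = 2" and "a \<noteq> b"
  shows "(\<exists>c. qf_act (theta a) (transv c) = theta b)
    \<longleftrightarrow> (\<exists>\<gamma>. \<gamma> \<noteq> 0 \<and> qf_act (theta a) (transv (sp_scale \<gamma> (sp_add a b))) = theta b)"
proof
  assume "\<exists>c. qf_act (theta a) (transv c) = theta b"
  then obtain c where c: "qf_act (theta a) (transv c) = theta b" ..
  obtain s where "s ^ 2 = 1 + theta a c"
    using surj_power2_finite_CHAR_2[OF char] by (metis surjD)
  with c have "sp_add a b = sp_scale s c"
    using qf_act_transv_theta_eq_iff[OF char] by blast
  moreover have "sp_add a b \<noteq> 0"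
    using assms(2) by (simp add: sp_add_eq_0_iff_CHAR_2[OF char])
  ultimately have "s \<noteq> 0" "c = sp_scale (inverse s) (sp_add a b)"
    by (auto simp: sp_scale_sp_scale sp_scale_def zero_prod_def)
  with c show "\<exists>\<gamma>. \<gamma> \<noteq> 0 \<and> qf_act (theta a) (transv (sp_scale \<gamma> (sp_add a b))) = theta b"
    by (intro exI[of _ "inverse s"]) simp
qed blast

lemma transv_scale_sp_add_theta_eq_iff:
  fixes a b :: "('a::{field,finite}, 'm::finite) sp"
  assumes char: "CHAR('a) = 2" and "a \<noteq> b" and "\<gamma> \<noteq> 0"
  shows "qf_act (theta a) (transv (sp_scale \<gamma> (sp_add a b))) = theta b
    \<longleftrightarrow> (inverse \<gamma>) ^ 2 = 1 + \<gamma> ^ 2 * (theta0 a + theta0 b + ((bil a b) ^ 2 + bil a b))"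
    (is "_ \<longleftrightarrow> _ = ?rhs")
proof -
  obtain s where s: "s ^ 2 = ?rhs"
    using surj_power2_finite_CHAR_2[OF char] by (metis surjD)
  have "sp_add a b \<noteq> 0"
    using assms(2) by (simp add: sp_add_eq_0_iff_CHAR_2[OF char])
  have "qf_act (theta a) (transv (sp_scale \<gamma> (sp_add a b))) = theta b
      \<longleftrightarrow> sp_scale (s * \<gamma>) (sp_add a b) = sp_add a b"
    using qf_act_transv_theta_eq_iff[OF char] s theta_scale_sp_add[OF char]
    by (metis sp_scale_sp_scale)
  also have "\<dots> \<longleftrightarrow> s = inverse \<gamma>"
    using sp_scale_eq_self_iff[OF \<open>sp_add a b \<noteq> 0\<close>] assms(3) by (auto simp: field_simps)
  also have "\<dots> \<longleftrightarrow> (inverse \<gamma>) ^ 2 = ?rhs"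
    using power2_eq_iff_CHAR_2[OF char] s by metis
  finally show ?thesis .
qed

lemma exists_transv_scale_sp_add_theta_eq_iff_artin_schreier:
  fixes a b :: "('a::{field,finite}, 'm::finite) sp"
  assumes char: "CHAR('a) = 2" and "a \<noteq> b"
  shows "(\<exists>\<gamma>. \<gamma> \<noteq> 0 \<and> qf_act (theta a) (transv (sp_scale \<gamma> (sp_add a b))) = theta b)
    \<longleftrightarrow> (\<exists>z. z ^ 2 + z = theta0 a + theta0 b)"
proof -
  let ?d = "theta0 a + theta0 b" and ?\<beta> = "bil a b"
  have "(\<exists>\<gamma>. \<gamma> \<noteq> 0 \<and> qf_act (theta a) (transv (sp_scale \<gamma> (sp_add a b))) = theta b)
      \<longleftrightarrow> (\<exists>\<gamma>. \<gamma> \<noteq> 0 \<and> (inverse \<gamma>) ^ 2 = 1 + \<gamma> ^ 2 * (?d + (?\<beta> ^ 2 + ?\<beta>)))"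
    using transv_scale_sp_add_theta_eq_iff[OF assms] by blast
  also have "\<dots> \<longleftrightarrow> (\<exists>z. z ^ 2 + z = ?d + (?\<beta> ^ 2 + ?\<beta>))"
    by (rule exists_inverse_power2_eq_iff_artin_schreier[OF char])
  also have "\<dots> \<longleftrightarrow> (\<exists>z. z ^ 2 + z = ?d)"
    by (rule artin_schreier_shift[OF char])
  finally show ?thesis .
qed

theorem lemmaA6:
  fixes a b :: "('a::{field, finite}, 'm::finite) sp" and h :: nat
  assumes "CARD('a) = 2 ^ h"
    and "a \<noteq> b"
  shows "((\<exists>c. qf_act (theta a) (transv c) = theta b)
           \<longleftrightarrow> (\<exists>\<gamma>::'a. \<gamma> \<noteq> 0 \<and> qf_act (theta a) (transv (sp_scale \<gamma> (sp_add a b))) = theta b))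
       \<and> ((\<exists>\<gamma>::'a. \<gamma> \<noteq> 0 \<and> qf_act (theta a) (transv (sp_scale \<gamma> (sp_add a b))) = theta b)
           \<longleftrightarrow> trace2 h (theta0 a) = trace2 h (theta0 b))
       \<and> (trace2 h (theta0 a) = trace2 h (theta0 b)
           \<longleftrightarrow> \<not> irreducible [:theta0 a + theta0 b, 1, 1:])"
proof -
  have char: "CHAR('a) = 2"
    using CHAR_eq_2_if_card_eq_power_2[OF assms(1)] .
  have "(\<exists>z. z ^ 2 + z = theta0 a + theta0 b) \<longleftrightarrow> trace2 h (theta0 a) = trace2 h (theta0 b)"
    unfolding trace2_eq_0_iff_artin_schreier[OF assms(1), symmetric] trace2_add[OF char]
    by (rule add_eq_0_iff_eq_CHAR_2[OF char])
  then show ?thesis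
    using exists_transv_theta_eq_iff_scale_sp_add[OF char assms(2)]
      exists_transv_scale_sp_add_theta_eq_iff_artin_schreier[OF char assms(2)]
      artin_schreier_poly_reducible_iff[OF char]
    by simp
qed

end
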